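(* Let $L\subset S^3$ be an oriented link, with $\mathcal{B}_L$, $\sim$ and the operations on $\mathcal{B}_L$ as in the context. If $(a_0,a_1)\sim(c_0,c_1)$ and $(b_0,b_1)\sim(d_0,d_1)$ in $\mathcal{B}_L$, then $(a_0,a_1)^{(b_0,b_1)}\sim(c_0,c_1)^{(d_0,d_1)}$ and $(a_0,a_1)_{(b_0,b_1)}\sim(c_0,c_1)_{(d_0,d_1)}$. Consequently these operations induce well-defined binary operations on $\mathcal{B}_L/\!\sim$.
   Context: An oriented link $L$ is an oriented subspace of $S^3$ homeomorphic to a finite disjoint union of circles. Let $N_L$ be a regular neighborhood of $L$ and $E_L$ the closure of $S^3\setminus N_L$; the orientation of $L$ induces an orientation of its normal bundle by the right-hand rule. Choose a 3-ball $B^3\subset S^3$ with $N_L\subset B^3$ and let $z_0,z_1$ be two antipodal points of $\partial B^3$. For a path $a$, $\overline{a}(t)=a(1-t)$; $a\cdot b$ denotes concatenation of paths. Let $\mathcal{B}_L$ be the set of pairs $(a_0,a_1)$ where $a_i\colon[0,1]\to E_L$ is a path from a point of $\partial N_L$ to $z_i$ ($i=0,1$) and $a_0(0)=a_1(0)$. Define $(a_0,a_1)\sim(b_0,b_1)$ if there is a homotopy $H_t\colon[0,1]\to E_L$, $t\in[0,1]$, with $H_0=\overline{a_0}\cdot a_1$, $H_1=\overline{b_0}\cdot b_1$, $H_t(0)=z_0$, $H_t(1)=z_1$ and $H_t(\tfrac12)\in\partial N_L$ for all $t$. For $p\in\partial N_L$, $m_p$ is the loop in $\partial N_L$ based at $p$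 going once around the meridian of the corresponding component of $L$ positively with respect to the normal orientation. Define operations on $\mathcal{B}_L$ by $(a_0,a_1)^{(b_0,b_1)}=(a_0\cdot\overline{b_0}\cdot m_{b_0(0)}\cdot b_0,\ a_1)$ and $(a_0,a_1)_{(b_0,b_1)}=(a_0,\ a_1\cdot\overline{b_1}\cdot m_{b_1(0)}\cdot b_1)$. *)

theory Defs
  imports "HOL-Analysis.Analysis"
begin

definition S3 :: "(complex \<times> complex) set" where
  "S3 = sphere 0 1"

definition solid_torus :: "(complex \<times> complex) set" where
  "solid_torus = {(z, w). cmod z \<le> 1 \<and> cmod w = 1}"

definition torus_bdry :: "(complex \<times> complex) set" where
  "torus_bdry = {(z, w). cmod z = 1 \<and> cmod w = 1}"

definition core_circle :: "(complex \<times> complex) set" where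
  "core_circle = {(z, w). z = 0 \<and> cmod w = 1}"

text \<open>An oriented link L with n components together with a regular (tubular)
  neighbourhood, given by embeddings phi k of the solid torus into S^3 with
  pairwise disjoint images; component k of L is the image of the core circle,
  oriented by w \<mapsto> phi k (0, w) with w running counterclockwise.\<close>
definition oriented_link_nbhd ::
  "(complex \<times> complex) set \<Rightarrow> nat \<Rightarrow> (nat \<Rightarrow> complex \<times> complex \<Rightarrow> complex \<times> complex) \<Rightarrow> bool" where
  "oriented_link_nbhd L n \<phi> \<longleftrightarrow>
     L \<subseteq> S3 \<and>
     (\<forall>k<n. continuous_on solid_torus (\<phi> k) \<and> inj_on (\<phi> k) solid_torus \<and> \<phi> k ` solid_torus \<subseteq> S3) \<and>
     (\<forall>k<n. \<forall>j<n. k \<noteq> j \<longrightarrow> \<phi> k ` solid_torus \<inter> \<phi> j ` solid_torus = {}) \<and>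
     L = (\<Union>k<n. \<phi> k ` core_circle)"

definition nbhd :: "nat \<Rightarrow> (nat \<Rightarrow> complex \<times> complex \<Rightarrow> complex \<times> complex) \<Rightarrow> (complex \<times> complex) set" where
  "nbhd n \<phi> = (\<Union>k<n. \<phi> k ` solid_torus)"

definition nbhd_bdry :: "nat \<Rightarrow> (nat \<Rightarrow> complex \<times> complex \<Rightarrow> complex \<times> complex) \<Rightarrow> (complex \<times> complex) set" where
  "nbhd_bdry n \<phi> = (\<Union>k<n. \<phi> k ` torus_bdry)"

definition link_exterior :: "nat \<Rightarrow> (nat \<Rightarrow> complex \<times> complex \<Rightarrow> complex \<times> complex) \<Rightarrow> (complex \<times> complex) set" where
  "link_exterior n \<phi> = closure (S3 - nbhd n \<phi>)"

definition meridian :: "nat \<Rightarrow> (nat \<Rightarrow> complex \<times> complex \<Rightarrow> complex \<times> complex) \<Rightarrow> complex \<times> complex \<Rightarrow> real \<Rightarrow> complex \<times> complex" where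
  "meridian n \<phi> p =
     (let (k, z, w) = (SOME (k, z, w). k < n \<and> (z, w) \<in> torus_bdry \<and> \<phi> k (z, w) = p)
      in (\<lambda>t. \<phi> k (z * cis (2 * pi * t), w)))"

definition B_L :: "nat \<Rightarrow> (nat \<Rightarrow> complex \<times> complex \<Rightarrow> complex \<times> complex) \<Rightarrow> complex \<times> complex \<Rightarrow> complex \<times> complex
    \<Rightarrow> ((real \<Rightarrow> complex \<times> complex) \<times> (real \<Rightarrow> complex \<times> complex)) set" where
  "B_L n \<phi> z0 z1 = {(a0, a1).
     path a0 \<and> path a1 \<and>
     path_image a0 \<subseteq> link_exterior n \<phi> \<and> path_image a1 \<subseteq> link_exterior n \<phi> \<and>
     pathstart a0 \<in> nbhd_bdry n \<phi> \<and> pathstart a1 = pathstart a0 \<and>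
     pathfinish a0 = z0 \<and> pathfinish a1 = z1}"

text \<open>The relation ~ ; H (t, s) is H_t(s).\<close>
definition B_equiv :: "nat \<Rightarrow> (nat \<Rightarrow> complex \<times> complex \<Rightarrow> complex \<times> complex) \<Rightarrow> complex \<times> complex \<Rightarrow> complex \<times> complex
    \<Rightarrow> (real \<Rightarrow> complex \<times> complex) \<times> (real \<Rightarrow> complex \<times> complex)
    \<Rightarrow> (real \<Rightarrow> complex \<times> complex) \<times> (real \<Rightarrow> complex \<times> complex) \<Rightarrow> bool" where
  "B_equiv n \<phi> z0 z1 a b \<longleftrightarrow>
     (\<exists>H :: real \<times> real \<Rightarrow> complex \<times> complex.
        continuous_on ({0..1} \<times> {0..1}) H \<and>
        H ` ({0..1} \<times> {0..1}) \<subseteq> link_exterior n \<phi> \<and>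
        (\<forall>s\<in>{0..1}. H (0, s) = (reversepath (fst a) +++ snd a) s) \<and>
        (\<forall>s\<in>{0..1}. H (1, s) = (reversepath (fst b) +++ snd b) s) \<and>
        (\<forall>t\<in>{0..1}. H (t, 0) = z0 \<and> H (t, 1) = z1 \<and> H (t, 1/2) \<in> nbhd_bdry n \<phi>))"

definition B_up :: "nat \<Rightarrow> (nat \<Rightarrow> complex \<times> complex \<Rightarrow> complex \<times> complex)
    \<Rightarrow> (real \<Rightarrow> complex \<times> complex) \<times> (real \<Rightarrow> complex \<times> complex)
    \<Rightarrow> (real \<Rightarrow> complex \<times> complex) \<times> (real \<Rightarrow> complex \<times> complex)
    \<Rightarrow> (real \<Rightarrow> complex \<times> complex) \<times> (real \<Rightarrow> complex \<times> complex)" where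
  "B_up n \<phi> a b =
     (fst a +++ reversepath (fst b) +++ meridian n \<phi> (pathstart (fst b)) +++ fst b, snd a)"

definition B_down :: "nat \<Rightarrow> (nat \<Rightarrow> complex \<times> complex \<Rightarrow> complex \<times> complex)
    \<Rightarrow> (real \<Rightarrow> complex \<times> complex) \<times> (real \<Rightarrow> complex \<times> complex)
    \<Rightarrow> (real \<Rightarrow> complex \<times> complex) \<times> (real \<Rightarrow> complex \<times> complex)
    \<Rightarrow> (real \<Rightarrow> complex \<times> complex) \<times> (real \<Rightarrow> complex \<times> complex)" where
  "B_down n \<phi> a b =
     (fst a, snd a +++ reversepath (snd b) +++ meridian n \<phi> (pathstart (snd b)) +++ snd b)"

end

theory Submission
  imports Defs
begin

text \<open>A homotopy \<open>H\<^sub>t\<close> of \<open>a\<^sub>0\<inverse> \<cdot> a\<^sub>1\<close> as in the definition of \<open>\<sim>\<close> splits at \<open>s = 1/2\<close>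
  into homotopies of \<open>a\<^sub>0\<close> and of \<open>a\<^sub>1\<close> whose common starting point stays on \<open>\<partial>N\<^sub>L\<close>, and
  conversely such a pair glues back to a homotopy. Given such pairs \<open>P\<close> and \<open>Q\<close> for
  \<open>(a\<^sub>0,a\<^sub>1) \<sim> (c\<^sub>0,c\<^sub>1)\<close> and \<open>(b\<^sub>0,b\<^sub>1) \<sim> (d\<^sub>0,d\<^sub>1)\<close>, the paths
  \<open>P\<^sub>t \<cdot> Q\<^sub>t\<inverse> \<cdot> m\<^bsub>Q\<^sub>t(0)\<^esub> \<cdot> Q\<^sub>t\<close> form the homotopy required for the operations.

  Two facts about meridians are not formal. The loop \<open>m\<^sub>p\<close> depends continuously on
  \<open>p \<in> \<partial>N\<^sub>L\<close>, since each tube is an embedding of a compact solid torus, hence a homeomorphism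
  onto its image. And \<open>m\<^sub>p\<close> lies in \<open>E\<^sub>L\<close>, i.e. \<open>\<partial>N\<^sub>L \<subseteq> closure (S\<^sup>3 - N\<^sub>L)\<close>: by invariance of
  domain a point of a boundary torus has no neighbourhood in \<open>S\<^sup>3\<close> inside its tube, because
  it has none inside the solid torus of revolution in \<open>\<real>\<^sup>3\<close>.\<close>

section \<open>Boundary tori lie in the link exterior\<close>

lemma torus_bdry_subset_solid_torus: "torus_bdry \<subseteq> solid_torus"
  by (auto simp: torus_bdry_def solid_torus_def)

lemma compact_solid_torus: "compact solid_torus"
proof -
  have "solid_torus = cball 0 1 \<times> sphere 0 1"
    by (auto simp: solid_torus_def)
  then show ?thesis
    by (metis compact_Times compact_cball compact_sphere)
qed

lemma compact_torus_bdry: "compact torus_bdry"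
proof -
  have "torus_bdry = sphere 0 1 \<times> sphere 0 1"
    by (auto simp: torus_bdry_def)
  then show ?thesis
    by (metis compact_Times compact_sphere)
qed

lemma torus_bdry_rotate: "(z, w) \<in> torus_bdry \<Longrightarrow> (z * cis \<theta>, w) \<in> torus_bdry"
  by (simp add: torus_bdry_def norm_mult)

lemma oriented_link_nbhdD:
  assumes "oriented_link_nbhd L n \<phi>" and "k < n"
  shows "continuous_on solid_torus (\<phi> k)" "inj_on (\<phi> k) solid_torus" "\<phi> k ` solid_torus \<subseteq> S3"
    and "\<And>j. j < n \<Longrightarrow> j \<noteq> k \<Longrightarrow> \<phi> j ` solid_torus \<inter> \<phi> k ` solid_torus = {}"
  using assms unfolding oriented_link_nbhd_def by auto

text \<open>The solid torus as a solid torus of revolution about the axis \<open>{0} \<times> \<real>\<close> of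
  \<open>\<complex> \<times> \<real> \<cong> \<real>\<^sup>3\<close>.\<close>
definition revolve :: "complex \<times> complex \<Rightarrow> complex \<times> real" where
  "revolve = (\<lambda>(z, w). (of_real (2 + Re z) * w, Im z))"

lemma continuous_on_revolve: "continuous_on A revolve"
  unfolding revolve_def case_prod_unfold by (intro continuous_intros)

lemma inj_on_revolve: "inj_on revolve {(z, w). cmod z < 2 \<and> cmod w = 1}"
proof (rule inj_onI, clarsimp)
  fix z w z' w' :: complex
  assume "cmod z < 2" "cmod w = 1" "cmod z' < 2" "cmod w' = 1"
    and eq: "revolve (z, w) = revolve (z', w')"
  then have pos: "2 + Re z > 0" "2 + Re z' > 0"
    using abs_Re_le_cmod[of z] abs_Re_le_cmod[of z'] by linarith+
  have rot: "of_real (2 + Re z) * w = of_real (2 + Re z') * w'" and "Im z = Im z'"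
    using eq by (simp_all add: revolve_def)
  have "cmod (of_real (2 + Re z) * w) = 2 + Re z" "cmod (of_real (2 + Re z') * w') = 2 + Re z'"
    using pos \<open>cmod w = 1\<close> \<open>cmod w' = 1\<close> by (simp_all only: norm_mult norm_of_real) simp_all
  with rot have "2 + Re z = 2 + Re z'"
    by metis
  with \<open>Im z = Im z'\<close> have "z = z'"
    by (simp add: complex_eq_iff)
  have "of_real (2 + Re z) \<noteq> (0::complex)"
    using pos by (simp only: of_real_eq_0_iff)
  with rot \<open>z = z'\<close> have "w = w'"
    by (metis mult_left_cancel)
  with \<open>z = z'\<close> show "z = z' \<and> w = w'" ..
qed

lemma revolve_torus_bdry_not_interior:
  assumes "(z, w) \<in> torus_bdry"
  shows "revolve (z, w) \<notin> interior (revolve ` solid_torus)"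
proof
  assume "revolve (z, w) \<in> interior (revolve ` solid_torus)"
  then obtain U where U: "open U" "revolve (z, w) \<in> U" "U \<subseteq> revolve ` solid_torus"
    by (rule interiorE)
  define g where "g = (\<lambda>l::real. revolve (of_real l * z, w))"
  have "continuous_on UNIV (\<lambda>l::real. (of_real l * z, w))"
    by (intro continuous_intros)
  then have "continuous_on UNIV g"
    unfolding g_def by (rule continuous_on_compose2[OF continuous_on_revolve[of UNIV]]) simp
  then have "open (g -` U)"
    using U(1) by (intro open_vimage)
  moreover have "1 \<in> g -` U"
    using U(2) by (simp add: g_def)
  ultimately obtain e where "e > 0" "ball 1 e \<subseteq> g -` U"
    using open_contains_ball by blast
  define l where "l = 1 + min (e / 2) (1 / 2)"
  have l: "1 < l" "l < 2" "l \<in> ball 1 e"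
    using \<open>e > 0\<close> by (auto simp: l_def dist_real_def)
  then have "g l \<in> revolve ` solid_torus"
    using \<open>ball 1 e \<subseteq> g -` U\<close> U(3) by blast
  then obtain x' where x': "x' \<in> solid_torus" "revolve x' = g l"
    by (metis imageE)
  have zw: "cmod z = 1" "cmod w = 1"
    using assms by (auto simp: torus_bdry_def)
  have "x' = (of_real l * z, w)"
  proof (rule inj_onD[OF inj_on_revolve])
    show "revolve x' = revolve (of_real l * z, w)"
      using x'(2) by (simp add: g_def)
    show "x' \<in> {(z, w). cmod z < 2 \<and> cmod w = 1}"
      using x'(1) by (auto simp: solid_torus_def)
    show "(of_real l * z, w) \<in> {(z, w). cmod z < 2 \<and> cmod w = 1}"
      using l zw by (simp add: norm_mult)
  qed
  then show False
    using x'(1) l zw by (simp add: solid_torus_def norm_mult)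
qed

lemma invariance_of_domain_S3:
  fixes f :: "complex \<times> complex \<Rightarrow> complex \<times> real"
  assumes "openin (top_of_set S3) S" "continuous_on S f" "inj_on f S"
  shows "open (f ` S)"
proof -
  have "openin (top_of_set UNIV) (f ` S)"
    by (rule invariance_of_domain_sphere_affine_set[of S f UNIV 1 0])
      (use assms in \<open>simp_all add: S3_def\<close>)
  then show ?thesis
    by simp
qed

lemma S3_nbhd_within_tube:
  assumes link: "oriented_link_nbhd L n \<phi>" and "k < n"
    and q: "q \<in> \<phi> k ` solid_torus" "q \<notin> link_exterior n \<phi>"
  obtains S where "openin (top_of_set S3) S" "q \<in> S" "S \<subseteq> \<phi> k ` solid_torus"
proof -
  obtain e where "e > 0" and e: "\<And>y. y \<in> S3 - nbhd n \<phi> \<Longrightarrow> e \<le> dist y q"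
    using q(2) unfolding link_exterior_def closure_approachable by (meson not_le)
  define C where "C = (\<Union>j\<in>{j. j < n \<and> j \<noteq> k}. \<phi> j ` solid_torus)"
  have "compact C"
    unfolding C_def using oriented_link_nbhdD(1)[OF link]
    by (intro compact_UN compact_continuous_image compact_solid_torus) auto
  moreover have "q \<notin> C"
    using oriented_link_nbhdD(4)[OF link \<open>k < n\<close>] q(1) by (auto simp: C_def)
  ultimately obtain e' where "e' > 0" "ball q e' \<subseteq> - C"
    by (metis compact_imp_closed open_Compl open_contains_ball ComplI)
  show ?thesis
  proof
    show "openin (top_of_set S3) (S3 \<inter> ball q (min e e'))"
      by (simp add: openin_open_Int)
    show "q \<in> S3 \<inter> ball q (min e e')"
      using q(1) oriented_link_nbhdD(3)[OF link \<open>k < n\<close>] \<open>e > 0\<close> \<open>e' > 0\<close> by auto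
    show "S3 \<inter> ball q (min e e') \<subseteq> \<phi> k ` solid_torus"
    proof
      fix y assume y: "y \<in> S3 \<inter> ball q (min e e')"
      then have "y \<in> nbhd n \<phi>"
        using e[of y] by (auto simp: dist_commute)
      then obtain j where "j < n" "y \<in> \<phi> j ` solid_torus"
        by (auto simp: nbhd_def)
      moreover have "y \<notin> C"
        using y \<open>ball q e' \<subseteq> - C\<close> by auto
      ultimately show "y \<in> \<phi> k ` solid_torus"
        by (cases "j = k") (auto simp: C_def)
    qed
  qed
qed

lemma tube_bdry_in_link_exterior:
  assumes link: "oriented_link_nbhd L n \<phi>" and k: "k < n" and x: "x \<in> torus_bdry"
  shows "\<phi> k x \<in> link_exterior n \<phi>"
proof (rule ccontr)
  assume "\<phi> k x \<notin> link_exterior n \<phi>"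
  moreover have xT: "x \<in> solid_torus"
    using x torus_bdry_subset_solid_torus by auto
  ultimately obtain S where S: "openin (top_of_set S3) S" "\<phi> k x \<in> S" "S \<subseteq> \<phi> k ` solid_torus"
    using S3_nbhd_within_tube[OF link k] by blast
  define \<psi> where "\<psi> = inv_into solid_torus (\<phi> k)"
  have \<psi>: "continuous_on (\<phi> k ` solid_torus) \<psi>"
    unfolding \<psi>_def using oriented_link_nbhdD[OF link k] compact_solid_torus
    by (intro continuous_on_inv) (auto simp: inv_into_f_f)
  have \<psi>S: "\<psi> ` S \<subseteq> solid_torus"
    using S(3) unfolding \<psi>_def by (metis image_mono image_subsetI inv_into_into subsetD)
  have "open ((revolve \<circ> \<psi>) ` S)"
  proof (rule invariance_of_domain_S3[OF S(1)])
    show "continuous_on S (revolve \<circ> \<psi>)"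
      by (rule continuous_on_compose[OF continuous_on_subset[OF \<psi> S(3)] continuous_on_revolve])
    have "inj_on revolve solid_torus"
      by (rule inj_on_subset[OF inj_on_revolve]) (auto simp: solid_torus_def)
    then show "inj_on (revolve \<circ> \<psi>) S"
      unfolding \<psi>_def using S(3) \<psi>S[unfolded \<psi>_def]
      by (intro comp_inj_on inj_on_inv_into) (auto intro: inj_on_subset)
  qed
  moreover have "(revolve \<circ> \<psi>) ` S \<subseteq> revolve ` solid_torus"
    using \<psi>S by auto
  moreover have "revolve x \<in> (revolve \<circ> \<psi>) ` S"
    using S(2) oriented_link_nbhdD(2)[OF link k] xT
    by (metis \<psi>_def comp_apply image_eqI inv_into_f_f)
  ultimately have "revolve x \<in> interior (revolve ` solid_torus)"
    by (meson interior_maximal subsetD)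
  with x show False
    using revolve_torus_bdry_not_interior by (cases x) auto
qed

section \<open>Meridian loops\<close>

lemma meridian_tube:
  assumes link: "oriented_link_nbhd L n \<phi>" and k: "k < n" and zw: "(z, w) \<in> torus_bdry"
  shows "meridian n \<phi> (\<phi> k (z, w)) = (\<lambda>t. \<phi> k (z * cis (2 * pi * t), w))"
proof -
  define P where "P = (\<lambda>(k', z', w'). k' < n \<and> (z', w') \<in> torus_bdry \<and> \<phi> k' (z', w') = \<phi> k (z, w))"
  have "P (k, z, w)"
    using k zw by (simp add: P_def)
  moreover have "P (k', z', w') \<Longrightarrow> (k', z', w') = (k, z, w)" for k' z' w'
  proof -
    assume "P (k', z', w')"
    then have k': "k' < n" "(z', w') \<in> solid_torus" "\<phi> k' (z', w') = \<phi> k (z, w)"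
      using torus_bdry_subset_solid_torus by (auto simp: P_def)
    have zwT: "(z, w) \<in> solid_torus"
      using zw torus_bdry_subset_solid_torus by auto
    have "k' = k"
      using oriented_link_nbhdD(4)[OF link k k'(1)] k' zwT by (metis disjoint_iff image_eqI)
    with k' zwT show ?thesis
      using oriented_link_nbhdD(2)[OF link k] by (auto dest: inj_onD)
  qed
  ultimately have "(SOME x. P x) = (k, z, w)"
    by (metis prod_cases3 someI)
  then show ?thesis
    by (simp add: meridian_def P_def)
qed

lemma meridian_loop:
  assumes link: "oriented_link_nbhd L n \<phi>" and p: "p \<in> nbhd_bdry n \<phi>"
  shows "path (meridian n \<phi> p)" "pathstart (meridian n \<phi> p) = p" "pathfinish (meridian n \<phi> p) = p"
    "\<And>s. meridian n \<phi> p s \<in> link_exterior n \<phi>"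
proof -
  obtain k z w where k: "k < n" and zw: "(z, w) \<in> torus_bdry" and p: "p = \<phi> k (z, w)"
    using p by (auto simp: nbhd_bdry_def)
  note m = meridian_tube[OF link k zw, folded p]
  show "pathstart (meridian n \<phi> p) = p" "pathfinish (meridian n \<phi> p) = p"
    by (simp_all add: m p[symmetric] pathstart_def pathfinish_def)
  show "meridian n \<phi> p s \<in> link_exterior n \<phi>" for s
    unfolding m using tube_bdry_in_link_exterior[OF link k torus_bdry_rotate[OF zw]] .
  have "continuous_on {0..1} (\<lambda>t. \<phi> k (z * cis (2 * pi * t), w))"
  proof (rule continuous_on_compose2[OF oriented_link_nbhdD(1)[OF link k]])
    show "continuous_on {0..1} (\<lambda>t. (z * cis (2 * pi * t), w))"
      by (intro continuous_intros)
    show "(\<lambda>t. (z * cis (2 * pi * t), w)) ` {0..1} \<subseteq> solid_torus"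
      using torus_bdry_rotate[OF zw] torus_bdry_subset_solid_torus by auto
  qed
  then show "path (meridian n \<phi> p)"
    by (simp add: m path_def)
qed

lemma continuous_on_meridian:
  assumes link: "oriented_link_nbhd L n \<phi>"
  shows "continuous_on (nbhd_bdry n \<phi> \<times> {0..1}) (\<lambda>(p, s). meridian n \<phi> p s)"
proof -
  have eq: "nbhd_bdry n \<phi> \<times> {0..1} = (\<Union>k<n. \<phi> k ` torus_bdry \<times> {0..1})"
    by (auto simp: nbhd_bdry_def)
  have tube_continuous: "continuous_on (\<phi> k ` torus_bdry \<times> {0..1}) (\<lambda>(p, s). meridian n \<phi> p s)"
    and tube_closed: "closed (\<phi> k ` torus_bdry \<times> {0..1::real})" if k: "k < n" for k
  proof -
    have cont: "continuous_on torus_bdry (\<phi> k)"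
      using oriented_link_nbhdD(1)[OF link k] torus_bdry_subset_solid_torus by (rule continuous_on_subset)
    have inj: "inj_on (\<phi> k) torus_bdry"
      using oriented_link_nbhdD(2)[OF link k] torus_bdry_subset_solid_torus by (rule inj_on_subset)
    show "closed (\<phi> k ` torus_bdry \<times> {0..1::real})"
      by (intro compact_imp_closed compact_Times compact_continuous_image[OF cont compact_torus_bdry])
        simp
    define \<psi> where "\<psi> = inv_into torus_bdry (\<phi> k)"
    have \<psi>: "continuous_on (\<phi> k ` torus_bdry) \<psi>"
      unfolding \<psi>_def using cont inj compact_torus_bdry
      by (intro continuous_on_inv) (auto simp: inv_into_f_f)
    have \<psi>_inv: "\<psi> p \<in> torus_bdry" "\<phi> k (\<psi> p) = p" if "p \<in> \<phi> k ` torus_bdry" for p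
      using that unfolding \<psi>_def by (auto simp: inv_into_f_f inj)
    define f where "f = (\<lambda>(p, s). (fst (\<psi> p) * cis (2 * pi * s), snd (\<psi> p)))"
    have "continuous_on (\<phi> k ` torus_bdry \<times> {0..1}) f"
      unfolding f_def case_prod_unfold
      by (intro continuous_intros continuous_on_compose2[OF \<psi>]) auto
    moreover have "f ` (\<phi> k ` torus_bdry \<times> {0..1}) \<subseteq> solid_torus"
      using \<psi>_inv(1) torus_bdry_rotate torus_bdry_subset_solid_torus
      by (fastforce simp: f_def case_prod_unfold)
    ultimately have "continuous_on (\<phi> k ` torus_bdry \<times> {0..1}) (\<phi> k \<circ> f)"
      using oriented_link_nbhdD(1)[OF link k] by (meson continuous_on_compose continuous_on_subset)
    then show "continuous_on (\<phi> k ` torus_bdry \<times> {0..1}) (\<lambda>(p, s). meridian n \<phi> p s)"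
    proof (rule continuous_on_eq)
      fix x assume "x \<in> \<phi> k ` torus_bdry \<times> {0..1::real}"
      then obtain p s where x: "x = (p, s)" and p: "p \<in> \<phi> k ` torus_bdry"
        by auto
      have "meridian n \<phi> p = meridian n \<phi> (\<phi> k (fst (\<psi> p), snd (\<psi> p)))"
        using \<psi>_inv(2)[OF p] by simp
      also have "\<dots> = (\<lambda>t. \<phi> k (fst (\<psi> p) * cis (2 * pi * t), snd (\<psi> p)))"
        using meridian_tube[OF link k, of "fst (\<psi> p)" "snd (\<psi> p)"] \<psi>_inv(1)[OF p] by simp
      finally show "(\<phi> k \<circ> f) x = (\<lambda>(p, s). meridian n \<phi> p s) x"
        by (simp add: x f_def)
    qed
  qed
  show ?thesis
    unfolding eq by (intro continuous_on_closed_Union) (simp_all add: tube_continuous tube_closed)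
qed

section \<open>Families of paths\<close>

lemma continuous_on_reversepath_family:
  assumes "continuous_on ({0..1} \<times> {0..1}) (\<lambda>(t, s). P t s)"
  shows "continuous_on ({0..1} \<times> {0..1}) (\<lambda>(t::real, s). reversepath (P t) s)"
proof -
  have "continuous_on ({0..1} \<times> {0..1}) (\<lambda>x. (\<lambda>(t, s). P t s) (fst x, 1 - snd x))"
    by (rule continuous_on_compose2[OF assms]) (auto intro!: continuous_intros)
  then show ?thesis
    by (simp add: reversepath_def case_prod_unfold)
qed

lemma continuous_on_joinpaths_family:
  assumes P: "continuous_on ({0..1} \<times> {0..1}) (\<lambda>(t, s). P t s)"
    and Q: "continuous_on ({0..1} \<times> {0..1}) (\<lambda>(t, s). Q t s)"
    and PQ: "\<And>t. t \<in> {0..1} \<Longrightarrow> P t 1 = Q t 0"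
  shows "continuous_on ({0..1} \<times> {0..1}) (\<lambda>(t::real, s). (P t +++ Q t) s)"
proof -
  have "continuous_on {x \<in> {0..1} \<times> {0..1}. snd x \<le> 1/2} (\<lambda>x. (\<lambda>(t, s). P t s) (fst x, 2 * snd x))"
    by (rule continuous_on_compose2[OF P]) (auto intro!: continuous_intros)
  moreover have "continuous_on {x \<in> {0..1} \<times> {0..1}. 1/2 \<le> snd x}
      (\<lambda>x. (\<lambda>(t, s). Q t s) (fst x, 2 * snd x - 1))"
    by (rule continuous_on_compose2[OF Q]) (auto intro!: continuous_intros)
  moreover have "P t (2 * s) = Q t (2 * s - 1)" if "(t, s) \<in> {0..1} \<times> {0..1}" "s = 1/2" for t s
    unfolding that(2) using PQ that(1) by simp
  ultimately have "continuous_on ({0..1} \<times> {0..1})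
      (\<lambda>x. if snd x \<le> 1/2 then P (fst x) (2 * snd x) else Q (fst x) (2 * snd x - 1))"
    by (intro continuous_on_cases_le continuous_intros) auto
  then show ?thesis
    by (simp add: joinpaths_def case_prod_unfold)
qed

definition path_family_in :: "'a::topological_space set \<Rightarrow> (real \<Rightarrow> real \<Rightarrow> 'a) \<Rightarrow> bool" where
  "path_family_in E P \<longleftrightarrow>
     continuous_on ({0..1} \<times> {0..1}) (\<lambda>(t, s). P t s) \<and> (\<forall>t\<in>{0..1}. \<forall>s\<in>{0..1}. P t s \<in> E)"

lemma path_family_in_reversepath:
  "path_family_in E P \<Longrightarrow> path_family_in E (\<lambda>t. reversepath (P t))"
  using continuous_on_reversepath_family[of P] unfolding path_family_in_def
  by (auto simp: reversepath_def)

lemma path_family_in_joinpaths: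
  assumes "path_family_in E P" "path_family_in E Q" "\<And>t. t \<in> {0..1} \<Longrightarrow> P t 1 = Q t 0"
  shows "path_family_in E (\<lambda>t. P t +++ Q t)"
proof -
  have "continuous_on ({0..1} \<times> {0..1}) (\<lambda>(t, s). (P t +++ Q t) s)"
    using assms by (intro continuous_on_joinpaths_family) (auto simp: path_family_in_def)
  moreover have "(P t +++ Q t) s \<in> E" if "t \<in> {0..1}" "s \<in> {0..1}" for t s
    using assms(1,2) that by (auto simp: path_family_in_def joinpaths_def)
  ultimately show ?thesis
    by (simp add: path_family_in_def)
qed

lemma path_family_in_meridian:
  assumes link: "oriented_link_nbhd L n \<phi>" and Q: "path_family_in (link_exterior n \<phi>) Q"
    and Q0: "\<And>t. t \<in> {0..1} \<Longrightarrow> Q t 0 \<in> nbhd_bdry n \<phi>"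
  shows "path_family_in (link_exterior n \<phi>) (\<lambda>t. meridian n \<phi> (Q t 0))"
  unfolding path_family_in_def
proof
  have "continuous_on ({0..1} \<times> {0..1}) (\<lambda>(t, s). Q t s)"
    using Q by (simp add: path_family_in_def)
  then have "continuous_on ({0..1} \<times> {0..1}) (\<lambda>x. (\<lambda>(t, s). Q t s) (fst x, 0))"
    by (rule continuous_on_compose2) (auto intro!: continuous_intros)
  then have "continuous_on ({0..1} \<times> {0..1}) (\<lambda>x. (Q (fst x) 0, snd x))"
    by (intro continuous_on_Pair continuous_on_snd continuous_on_id) simp
  then have "continuous_on ({0..1} \<times> {0..1}) (\<lambda>x. (\<lambda>(p, s). meridian n \<phi> p s) (Q (fst x) 0, snd x))"
    by (rule continuous_on_compose2[OF continuous_on_meridian[OF link]]) (auto simp: Q0)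
  then show "continuous_on ({0..1} \<times> {0..1}) (\<lambda>(t, s). meridian n \<phi> (Q t 0) s)"
    by (simp add: case_prod_unfold)
  show "\<forall>t\<in>{0..1}. \<forall>s\<in>{0..1}. meridian n \<phi> (Q t 0) s \<in> link_exterior n \<phi>"
    using meridian_loop(4)[OF link Q0] by blast
qed

section \<open>Compatibility of the operations with \<open>\<sim>\<close>\<close>

definition meridian_conj :: "nat \<Rightarrow> (nat \<Rightarrow> complex \<times> complex \<Rightarrow> complex \<times> complex)
    \<Rightarrow> (real \<Rightarrow> complex \<times> complex) \<Rightarrow> (real \<Rightarrow> complex \<times> complex) \<Rightarrow> real \<Rightarrow> complex \<times> complex" where
  "meridian_conj n \<phi> p q = p +++ reversepath q +++ meridian n \<phi> (pathstart q) +++ q"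

lemma B_up_eq: "B_up n \<phi> a b = (meridian_conj n \<phi> (fst a) (fst b), snd a)"
  by (simp add: B_up_def meridian_conj_def)

lemma B_down_eq: "B_down n \<phi> a b = (fst a, meridian_conj n \<phi> (snd a) (snd b))"
  by (simp add: B_down_def meridian_conj_def)

lemma meridian_conj_ends [simp]:
  "meridian_conj n \<phi> p q 0 = p 0" "meridian_conj n \<phi> p q 1 = q 1"
  by (simp_all add: meridian_conj_def joinpaths_def)

lemma meridian_conj_cong:
  assumes "\<forall>s\<in>{0..1}. p s = p' s" "\<forall>s\<in>{0..1}. q s = q' s"
  shows "\<forall>s\<in>{0..1}. meridian_conj n \<phi> p q s = meridian_conj n \<phi> p' q' s"
  using assms by (auto simp: meridian_conj_def joinpaths_def reversepath_def pathstart_def)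

lemma meridian_conj_in_link_exterior:
  assumes link: "oriented_link_nbhd L n \<phi>"
    and "path p" "path_image p \<subseteq> link_exterior n \<phi>"
    and "path q" "path_image q \<subseteq> link_exterior n \<phi>"
    and "pathfinish p = pathfinish q" "pathstart q \<in> nbhd_bdry n \<phi>"
  shows "path (meridian_conj n \<phi> p q)" "path_image (meridian_conj n \<phi> p q) \<subseteq> link_exterior n \<phi>"
    "pathstart (meridian_conj n \<phi> p q) = pathstart p" "pathfinish (meridian_conj n \<phi> p q) = pathfinish q"
proof -
  note m = meridian_loop[OF link \<open>pathstart q \<in> nbhd_bdry n \<phi>\<close>]
  have "path_image (meridian n \<phi> (pathstart q)) \<subseteq> link_exterior n \<phi>"
    using m(4) by (auto simp: path_image_def)
  with assms m show "path_image (meridian_conj n \<phi> p q) \<subseteq> link_exterior n \<phi>"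
    unfolding meridian_conj_def by (intro subset_path_image_join) (simp_all add: path_image_reversepath)
  from assms m show "path (meridian_conj n \<phi> p q)"
    unfolding meridian_conj_def by (intro path_join_imp) simp_all
  show "pathstart (meridian_conj n \<phi> p q) = pathstart p" "pathfinish (meridian_conj n \<phi> p q) = pathfinish q"
    by (simp_all add: meridian_conj_def)
qed

lemma B_up_in_B_L:
  assumes link: "oriented_link_nbhd L n \<phi>" and "a \<in> B_L n \<phi> z0 z1" "b \<in> B_L n \<phi> z0 z1"
  shows "B_up n \<phi> a b \<in> B_L n \<phi> z0 z1"
  using assms meridian_conj_in_link_exterior[OF link, of "fst a" "fst b"]
  by (auto simp: B_up_eq B_L_def)

lemma B_down_in_B_L:
  assumes link: "oriented_link_nbhd L n \<phi>" and "a \<in> B_L n \<phi> z0 z1" "b \<in> B_L n \<phi> z0 z1"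
  shows "B_down n \<phi> a b \<in> B_L n \<phi> z0 z1"
  using assms meridian_conj_in_link_exterior[OF link, of "snd a" "snd b"]
  by (auto simp: B_down_eq B_L_def)

lemma path_family_in_meridian_conj:
  assumes link: "oriented_link_nbhd L n \<phi>"
    and P: "path_family_in (link_exterior n \<phi>) P" and Q: "path_family_in (link_exterior n \<phi>) Q"
    and PQ: "\<And>t. t \<in> {0..1} \<Longrightarrow> P t 1 = Q t 1" and Q0: "\<And>t. t \<in> {0..1} \<Longrightarrow> Q t 0 \<in> nbhd_bdry n \<phi>"
  shows "path_family_in (link_exterior n \<phi>) (\<lambda>t. meridian_conj n \<phi> (P t) (Q t))"
proof -
  note M = path_family_in_meridian[OF link Q Q0]
  have M01: "meridian n \<phi> (Q t 0) 0 = Q t 0" "meridian n \<phi> (Q t 0) 1 = Q t 0" if "t \<in> {0..1}" for t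
    using meridian_loop(2,3)[OF link Q0[OF that]] by (simp_all add: pathstart_def pathfinish_def)
  have "path_family_in (link_exterior n \<phi>)
      (\<lambda>t. P t +++ reversepath (Q t) +++ meridian n \<phi> (Q t 0) +++ Q t)"
    by (intro path_family_in_joinpaths path_family_in_reversepath P Q M)
      (simp_all add: M01 PQ joinpaths_def reversepath_def)
  then show ?thesis
    by (simp add: meridian_conj_def pathstart_def)
qed

lemma B_equivI_path_families:
  assumes P0: "path_family_in (link_exterior n \<phi>) P0" and P1: "path_family_in (link_exterior n \<phi>) P1"
    and a: "\<forall>s\<in>{0..1}. P0 0 s = fst a s \<and> P1 0 s = snd a s"
    and c: "\<forall>s\<in>{0..1}. P0 1 s = fst c s \<and> P1 1 s = snd c s"
    and ends: "\<forall>t\<in>{0..1}. P0 t 0 \<in> nbhd_bdry n \<phi> \<and> P1 t 0 = P0 t 0 \<and> P0 t 1 = z0 \<and> P1 t 1 = z1"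
  shows "B_equiv n \<phi> z0 z1 a c"
proof -
  have "path_family_in (link_exterior n \<phi>) (\<lambda>t. reversepath (P0 t) +++ P1 t)"
    using ends by (intro path_family_in_joinpaths path_family_in_reversepath P0 P1)
      (simp add: reversepath_def)
  then show ?thesis
    unfolding B_equiv_def path_family_in_def
    using a c ends
    by (intro exI[of _ "\<lambda>(t, s). (reversepath (P0 t) +++ P1 t) s"])
      (auto simp: joinpaths_def reversepath_def)
qed

lemma path_family_in_reparam:
  assumes H: "continuous_on ({0..1} \<times> {0..1}) H" "H ` ({0..1} \<times> {0..1}) \<subseteq> E"
    and f: "continuous_on {0..1} f" "f ` {0..1} \<subseteq> {0..1}"
  shows "path_family_in E (\<lambda>t s. H (t, f s))"
proof -
  have sub: "(\<lambda>x. (fst x, f (snd x))) ` ({0..1} \<times> {0..1}) \<subseteq> {0..1} \<times> {0..1}"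
    using f(2) by auto
  have "continuous_on ({0..1} \<times> {0..1}) (\<lambda>x. f (snd x))"
    by (rule continuous_on_compose2[OF f(1) continuous_on_snd[OF continuous_on_id]]) auto
  then have "continuous_on ({0..1} \<times> {0..1}) (\<lambda>x. H (fst x, f (snd x)))"
    by (intro continuous_on_compose2[OF H(1) _ sub] continuous_on_Pair continuous_on_fst continuous_on_id)
  moreover have "H (t, f s) \<in> E" if "t \<in> {0..1}" "s \<in> {0..1}" for t s
  proof -
    have "(t, f s) \<in> {0..1} \<times> {0..1}"
      using f(2) that by (auto simp: image_subset_iff)
    then show ?thesis
      using H(2) by blast
  qed
  ultimately show ?thesis
    by (simp add: path_family_in_def case_prod_unfold)
qed

lemma joinpaths_reversepath_halves:
  assumes "pathstart q = pathstart p" "s \<in> {0..1}"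
  shows "(reversepath p +++ q) ((1 - s) / 2) = p s" "(reversepath p +++ q) ((1 + s) / 2) = q s"
  using assms by (auto simp: joinpaths_def reversepath_def pathstart_def field_simps)

lemma B_equivE_path_families:
  assumes a: "a \<in> B_L n \<phi> z0 z1" and c: "c \<in> B_L n \<phi> z0 z1" and ac: "B_equiv n \<phi> z0 z1 a c"
  obtains P0 P1 where "path_family_in (link_exterior n \<phi>) P0" "path_family_in (link_exterior n \<phi>) P1"
    "\<forall>s\<in>{0..1}. P0 0 s = fst a s \<and> P1 0 s = snd a s"
    "\<forall>s\<in>{0..1}. P0 1 s = fst c s \<and> P1 1 s = snd c s"
    "\<forall>t\<in>{0..1}. P0 t 0 \<in> nbhd_bdry n \<phi> \<and> P1 t 0 = P0 t 0 \<and> P0 t 1 = z0 \<and> P1 t 1 = z1"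
proof -
  obtain H :: "real \<times> real \<Rightarrow> complex \<times> complex"
    where H: "continuous_on ({0..1} \<times> {0..1}) H" "H ` ({0..1} \<times> {0..1}) \<subseteq> link_exterior n \<phi>"
    and H0: "\<forall>s\<in>{0..1}. H (0, s) = (reversepath (fst a) +++ snd a) s"
    and H1: "\<forall>s\<in>{0..1}. H (1, s) = (reversepath (fst c) +++ snd c) s"
    and Ht: "\<forall>t\<in>{0..1}. H (t, 0) = z0 \<and> H (t, 1) = z1 \<and> H (t, 1/2) \<in> nbhd_bdry n \<phi>"
    using ac unfolding B_equiv_def by blast
  have half: "(1 - s) / 2 \<in> {0..1}" "(1 + s) / 2 \<in> {0..1}" if "s \<in> {0..1::real}" for s
    using that by auto
  show ?thesis
  proof (rule that)
    show "path_family_in (link_exterior n \<phi>) (\<lambda>t s. H (t, (1 - s) / 2))"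
      "path_family_in (link_exterior n \<phi>) (\<lambda>t s. H (t, (1 + s) / 2))"
      using half by (auto intro!: path_family_in_reparam[OF H] continuous_intros)
    have a_start: "pathstart (snd a) = pathstart (fst a)" and c_start: "pathstart (snd c) = pathstart (fst c)"
      using a c by (simp_all add: B_L_def case_prod_unfold)
    show "\<forall>s\<in>{0..1}. H (0, (1 - s) / 2) = fst a s \<and> H (0, (1 + s) / 2) = snd a s"
    proof
      fix s :: real assume s: "s \<in> {0..1}"
      show "H (0, (1 - s) / 2) = fst a s \<and> H (0, (1 + s) / 2) = snd a s"
        using H0 half[OF s] joinpaths_reversepath_halves[OF a_start s] by simp
    qed
    show "\<forall>s\<in>{0..1}. H (1, (1 - s) / 2) = fst c s \<and> H (1, (1 + s) / 2) = snd c s"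
    proof
      fix s :: real assume s: "s \<in> {0..1}"
      show "H (1, (1 - s) / 2) = fst c s \<and> H (1, (1 + s) / 2) = snd c s"
        using H1 half[OF s] joinpaths_reversepath_halves[OF c_start s] by simp
    qed
    show "\<forall>t\<in>{0..1}. H (t, (1 - 0) / 2) \<in> nbhd_bdry n \<phi> \<and> H (t, (1 + 0) / 2) = H (t, (1 - 0) / 2)
        \<and> H (t, (1 - 1) / 2) = z0 \<and> H (t, (1 + 1) / 2) = z1"
      using Ht by simp
  qed
qed

lemma B_equiv_B_up_B_down:
  assumes link: "oriented_link_nbhd L n \<phi>"
    and a: "a \<in> B_L n \<phi> z0 z1" and b: "b \<in> B_L n \<phi> z0 z1"
    and c: "c \<in> B_L n \<phi> z0 z1" and d: "d \<in> B_L n \<phi> z0 z1"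
    and ac: "B_equiv n \<phi> z0 z1 a c" and bd: "B_equiv n \<phi> z0 z1 b d"
  shows "B_equiv n \<phi> z0 z1 (B_up n \<phi> a b) (B_up n \<phi> c d)"
    and "B_equiv n \<phi> z0 z1 (B_down n \<phi> a b) (B_down n \<phi> c d)"
proof -
  obtain P0 P1 where P: "path_family_in (link_exterior n \<phi>) P0" "path_family_in (link_exterior n \<phi>) P1"
    "\<forall>s\<in>{0..1}. P0 0 s = fst a s \<and> P1 0 s = snd a s" "\<forall>s\<in>{0..1}. P0 1 s = fst c s \<and> P1 1 s = snd c s"
    "\<forall>t\<in>{0..1}. P0 t 0 \<in> nbhd_bdry n \<phi> \<and> P1 t 0 = P0 t 0 \<and> P0 t 1 = z0 \<and> P1 t 1 = z1"
    using B_equivE_path_families[OF a c ac] .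
  obtain Q0 Q1 where Q: "path_family_in (link_exterior n \<phi>) Q0" "path_family_in (link_exterior n \<phi>) Q1"
    "\<forall>s\<in>{0..1}. Q0 0 s = fst b s \<and> Q1 0 s = snd b s" "\<forall>s\<in>{0..1}. Q0 1 s = fst d s \<and> Q1 1 s = snd d s"
    "\<forall>t\<in>{0..1}. Q0 t 0 \<in> nbhd_bdry n \<phi> \<and> Q1 t 0 = Q0 t 0 \<and> Q0 t 1 = z0 \<and> Q1 t 1 = z1"
    using B_equivE_path_families[OF b d bd] .
  show "B_equiv n \<phi> z0 z1 (B_up n \<phi> a b) (B_up n \<phi> c d)"
    unfolding B_up_eq
  proof (rule B_equivI_path_families[OF path_family_in_meridian_conj[OF link P(1) Q(1)] P(2)])
    show "\<forall>s\<in>{0..1}. meridian_conj n \<phi> (P0 0) (Q0 0) s = fst (meridian_conj n \<phi> (fst a) (fst b), snd a) s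
        \<and> P1 0 s = snd (meridian_conj n \<phi> (fst a) (fst b), snd a) s"
      using meridian_conj_cong[of "P0 0" "fst a" "Q0 0" "fst b"] P(3) Q(3) by simp
    show "\<forall>s\<in>{0..1}. meridian_conj n \<phi> (P0 1) (Q0 1) s = fst (meridian_conj n \<phi> (fst c) (fst d), snd c) s
        \<and> P1 1 s = snd (meridian_conj n \<phi> (fst c) (fst d), snd c) s"
      using meridian_conj_cong[of "P0 1" "fst c" "Q0 1" "fst d"] P(4) Q(4) by simp
  qed (use P(5) Q(5) in auto)
  show "B_equiv n \<phi> z0 z1 (B_down n \<phi> a b) (B_down n \<phi> c d)"
    unfolding B_down_eq
  proof (rule B_equivI_path_families[OF P(1) path_family_in_meridian_conj[OF link P(2) Q(2)]])
    show "\<forall>s\<in>{0..1}. P0 0 s = fst (fst a, meridian_conj n \<phi> (snd a) (snd b)) s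
        \<and> meridian_conj n \<phi> (P1 0) (Q1 0) s = snd (fst a, meridian_conj n \<phi> (snd a) (snd b)) s"
      using meridian_conj_cong[of "P1 0" "snd a" "Q1 0" "snd b"] P(3) Q(3) by simp
    show "\<forall>s\<in>{0..1}. P0 1 s = fst (fst c, meridian_conj n \<phi> (snd c) (snd d)) s
        \<and> meridian_conj n \<phi> (P1 1) (Q1 1) s = snd (fst c, meridian_conj n \<phi> (snd c) (snd d)) s"
      using meridian_conj_cong[of "P1 1" "snd c" "Q1 1" "snd d"] P(4) Q(4) by simp
  qed (use P(5) Q(5) in auto)
qed

theorem mainTheorem4:
  fixes L :: "(complex \<times> complex) set" and n :: nat
    and \<phi> :: "nat \<Rightarrow> complex \<times> complex \<Rightarrow> complex \<times> complex"
    and \<beta> :: "real^3 \<Rightarrow> complex \<times> complex" and u :: "real^3"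
    and z0 z1 :: "complex \<times> complex"
    and a b c d :: "(real \<Rightarrow> complex \<times> complex) \<times> (real \<Rightarrow> complex \<times> complex)"
  assumes link: "oriented_link_nbhd L n \<phi>"
    and ball_cont: "continuous_on (cball 0 1) \<beta>"
    and ball_inj: "inj_on \<beta> (cball 0 1)"
    and ball_S3: "\<beta> ` cball 0 1 \<subseteq> S3"
    and N_in_ball: "nbhd n \<phi> \<subseteq> \<beta> ` ball 0 1"
    and u: "norm u = 1"
    and z0: "z0 = \<beta> u"
    and z1: "z1 = \<beta> (- u)"
    and a: "a \<in> B_L n \<phi> z0 z1" and b: "b \<in> B_L n \<phi> z0 z1"
    and c: "c \<in> B_L n \<phi> z0 z1" and d: "d \<in> B_L n \<phi> z0 z1"
    and ac: "B_equiv n \<phi> z0 z1 a c"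
    and bd: "B_equiv n \<phi> z0 z1 b d"
  shows "B_up n \<phi> a b \<in> B_L n \<phi> z0 z1 \<and> B_down n \<phi> a b \<in> B_L n \<phi> z0 z1 \<and>
         B_equiv n \<phi> z0 z1 (B_up n \<phi> a b) (B_up n \<phi> c d) \<and>
         B_equiv n \<phi> z0 z1 (B_down n \<phi> a b) (B_down n \<phi> c d)"
  using B_up_in_B_L[OF link a b] B_down_in_B_L[OF link a b] B_equiv_B_up_B_down[OF link a b c d ac bd]
  by blast

end
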